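(* Let $\mathcal X$ be a nonempty set, $n,m,d$ positive integers, and for $i=1,\dots,n$ let $\omega_i>0$, let $\mathbf C_i\in\mathbb H^{d\times d}_{++}$, and let $\mathbf A^{1/2}_i:\mathcal X\to\mathbb C^{m\times d}$ and $\mathbf B_i:\mathcal X\to\mathbb H^{m\times m}_{++}$ be arbitrary functions. Define the matrix ratio $\mathbf M_i(x)=(\mathbf A^{1/2}_i(x))^{H}\mathbf B_i(x)^{-1}\mathbf A^{1/2}_i(x)\in\mathbb C^{d\times d}$ and, for $x\in\mathcal X$ and $\mathbf Y_1,\dots,\mathbf Y_n\in\mathbb C^{m\times d}$, $$f_q(x,\mathbf Y_1,\dots,\mathbf Y_n)=\sum_{i=1}^n\omega_i\,\mathrm{tr}\Big(2\Re\{(\mathbf A^{1/2}_i(x))^{H}\mathbf Y_i\mathbf C_i\}-\mathbf Y_i^{H}\mathbf B_i(x)\mathbf Y_i\mathbf C_i\Big).$$ Then for every fixed $x\in\mathcal X$, $\max_{\mathbf Y_1,\dots,\mathbf Y_n\in\mathbb C^{m\times d}} f_q(x,\mathbf Y_1,\dots,\mathbf Y_n)=\sum_{i=1}^n\omega_i\,\mathrm{tr}(\mathbf C_i\mathbf M_i(x))$, the maximum being attained uniquely at $\mathbf Y_i=\mathbf B_i(x)^{-1}\mathbf A^{1/2}_i(x)$, $i=1,\dots,n$. Consequently, the problem $\max_{x\in\mathcal X}\sum_{i=1}^n\omega_i\mathrm{tr}(\mathbf C_i\mathbf M_i(x))$ is equivalent to $\max_{x\in\mathcal X,\ \mathbf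 Y_i\in\mathbb C^{m\times d}} f_q(x,\mathbf Y_1,\dots,\mathbf Y_n)$: both have the same optimal value, and $x^\star$ is optimal for the former if and only if $(x^\star,\mathbf B_1(x^\star)^{-1}\mathbf A^{1/2}_1(x^\star),\dots,\mathbf B_n(x^\star)^{-1}\mathbf A^{1/2}_n(x^\star))$ is optimal for the latter.
   Context: $\mathbb H^{k\times k}_{++}$ denotes the set of $k\times k$ Hermitian positive definite matrices; $(\cdot)^H$ is conjugate transpose; $\Re$ is the real part applied entrywise (so $\mathrm{tr}(2\Re\{\mathbf A\})=2\Re\,\mathrm{tr}(\mathbf A)$). *)

theory Defs
  imports "HOL-Analysis.Analysis"
begin

text \<open>Complex matrices are rendered with type-indexed dimensions:
  a complex m x d matrix is of type complex^'d^'m (rows indexed by 'm).\<close>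

definition cadj :: "complex^'c^'r \<Rightarrow> complex^'r^'c" where
  "cadj A = (\<chi> i j. cnj (A $ j $ i))"

definition mRe :: "complex^'c^'r \<Rightarrow> complex^'c^'r" where
  "mRe A = (\<chi> i j. complex_of_real (Re (A $ i $ j)))"

definition hermitian :: "complex^'n^'n \<Rightarrow> bool" where
  "hermitian B \<longleftrightarrow> cadj B = B"

definition hpd :: "complex^'n^'n \<Rightarrow> bool" where
  "hpd B \<longleftrightarrow> hermitian B \<and>
     (\<forall>v::complex^'n. v \<noteq> 0 \<longrightarrow> 0 < Re (\<Sum>i\<in>UNIV. cnj (v $ i) * (B *v v) $ i))"

definition mratio :: "complex^'d^'m \<Rightarrow> complex^'m^'m \<Rightarrow> complex^'d^'d" where
  "mratio A B = cadj A ** matrix_inv B ** A"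

text \<open>The quadratic-transform objective f_q.  Each summand trace is real for
  Hermitian B_i, C_i; we take the real part of the whole sum so that f_q is real valued.\<close>
definition fq :: "('n::finite \<Rightarrow> real) \<Rightarrow> ('n \<Rightarrow> complex^'d^'d)
    \<Rightarrow> ('x \<Rightarrow> 'n \<Rightarrow> complex^'d^'m) \<Rightarrow> ('x \<Rightarrow> 'n \<Rightarrow> complex^'m^'m)
    \<Rightarrow> 'x \<Rightarrow> ('n \<Rightarrow> complex^'d^'m) \<Rightarrow> real" where
  "fq \<omega> C A B x Y = Re (\<Sum>i\<in>UNIV. complex_of_real (\<omega> i) *
      trace (2 *\<^sub>R mRe (cadj (A x i) ** Y i ** C i) - cadj (Y i) ** B x i ** Y i ** C i))"

definition gobj :: "('n::finite \<Rightarrow> real) \<Rightarrow> ('n \<Rightarrow> complex^'d^'d)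
    \<Rightarrow> ('x \<Rightarrow> 'n \<Rightarrow> complex^'d^'m) \<Rightarrow> ('x \<Rightarrow> 'n \<Rightarrow> complex^'m^'m)
    \<Rightarrow> 'x \<Rightarrow> complex" where
  "gobj \<omega> C A B x = (\<Sum>i\<in>UNIV. complex_of_real (\<omega> i) * trace (C i ** mratio (A x i) (B x i)))"

end

theory Submission
  imports Defs
begin

text \<open>Fix \<open>x\<close> and write \<open>Y\<^sub>i = B\<^sub>i\<^sup>-\<^sup>1 A\<^sub>i + Z\<^sub>i\<close>. Completing the square turns the
  \<open>i\<close>-th summand of \<open>f\<^sub>q\<close> into \<open>tr(C\<^sub>i M\<^sub>i) - tr(Z\<^sub>i\<^sup>H B\<^sub>i Z\<^sub>i C\<^sub>i)\<close>. Writing the positive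
  definite \<open>B\<close> as a sum of rank-one matrices \<open>\<Sum>\<^sub>r b\<^sub>r b\<^sub>r\<^sup>H\<close> (a Cholesky-type elimination),
  \<open>tr(Z\<^sup>H B Z C) = \<Sum>\<^sub>r (Z\<^sup>H b\<^sub>r)\<^sup>H C (Z\<^sup>H b\<^sub>r)\<close>, which is positive unless \<open>Z = 0\<close>. So the
  maximum over \<open>Y\<close> is \<open>\<Sum>\<^sub>i \<omega>\<^sub>i tr(C\<^sub>i M\<^sub>i(x))\<close>, attained only at \<open>Y\<^sub>i = B\<^sub>i\<^sup>-\<^sup>1 A\<^sub>i\<close>, and the
  equivalence of the two outer problems is a formal consequence of this partial maximisation.\<close>

lemma cadj_cadj [simp]: "cadj (cadj A) = A"
  by (simp add: cadj_def vec_eq_iff)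

lemma cadj_mult: "cadj ((X::complex^'b^'a) ** (Y::complex^'c^'b)) = cadj Y ** cadj X"
  by (simp add: cadj_def vec_eq_iff matrix_matrix_mult_def mult.commute)

lemma cadj_add: "cadj (X + Y) = cadj X + cadj Y"
  by (simp add: cadj_def vec_eq_iff)

lemma cadj_diff: "cadj (X - Y) = cadj X - cadj Y"
  by (simp add: cadj_def vec_eq_iff)

lemma cadj_mat: "cadj (mat 1 :: complex^'n^'n) = mat 1"
  by (simp add: cadj_def vec_eq_iff mat_def)

lemma trace_cadj: "trace (cadj M) = cnj (trace M)"
  by (simp add: cadj_def trace_def)

lemma trace_mRe: "trace (mRe M) = complex_of_real (Re (trace M))"
  by (simp add: mRe_def trace_def)

lemma trace_scaleR: "trace (c *\<^sub>R (M::complex^'n^'n)) = complex_of_real c * trace M"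
  unfolding trace_def by (simp add: sum_distrib_left) (simp add: scaleR_conv_of_real)

lemma matrix_add_rdistrib: "((A::'a::comm_ring_1^'n^'m) + B) ** C = A ** C + B ** C"
  by (simp add: matrix_matrix_mult_def vec_eq_iff sum.distrib distrib_right)

lemma hermitian_entry: "hermitian B \<Longrightarrow> B $ j $ i = cnj (B $ i $ j)"
  unfolding hermitian_def cadj_def by (metis vec_lambda_beta)

lemma hermitian_diag_real: "hermitian B \<Longrightarrow> B $ k $ k = complex_of_real (Re (B $ k $ k))"
  using hermitian_entry[of B k k] by (metis Reals_cnj_iff of_real_Re)

definition qform :: "complex^'n^'n \<Rightarrow> complex^'n \<Rightarrow> complex" where
  "qform B v = (\<Sum>i\<in>UNIV. cnj (v $ i) * (B *v v) $ i)"

definition psd :: "complex^'n^'n \<Rightarrow> bool" where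
  "psd B \<longleftrightarrow> hermitian B \<and> (\<forall>v. 0 \<le> Re (qform B v))"

definition outer :: "complex^'n \<Rightarrow> complex^'n^'n" where
  "outer v = (\<chi> i j. v $ i * cnj (v $ j))"

lemma hpd_iff_qform: "hpd B \<longleftrightarrow> hermitian B \<and> (\<forall>v. v \<noteq> 0 \<longrightarrow> 0 < Re (qform B v))"
  unfolding hpd_def qform_def ..

lemma qform_zero [simp]: "qform B 0 = 0"
  by (simp add: qform_def)

lemma hpd_imp_psd: "hpd B \<Longrightarrow> psd B"
  unfolding hpd_iff_qform psd_def by (metis less_imp_le order_refl qform_zero zero_complex.sel(1))

lemma qform_add: "qform (A + B) v = qform A v + qform B v"
  by (simp add: qform_def matrix_vector_mult_add_rdistrib distrib_left sum.distrib)

lemma qform_diff: "qform (A - B) v = qform A v - qform B v"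
  by (simp add: qform_def matrix_vector_mult_diff_rdistrib right_diff_distrib sum_subtractf)

lemma qform_sum: "finite R \<Longrightarrow> qform (\<Sum>r\<in>R. M r) v = (\<Sum>r\<in>R. qform (M r) v)"
  by (induction R rule: finite_induct) (simp_all add: qform_add, simp add: qform_def)

lemma matrix_vector_mult_axis: "((B::complex^'n^'n) *v axis j 1) $ k = B $ k $ j"
  by (simp add: axis_def matrix_vector_mult_def if_distrib cong: if_cong)

lemma qform_axis: "qform B (axis k 1) = B $ k $ k"
proof -
  have "qform B (axis k 1) = (\<Sum>i\<in>UNIV. if i = k then B $ k $ k else 0)"
    unfolding qform_def matrix_vector_mult_axis by (rule sum.cong) (auto simp: axis_def)
  then show ?thesis by simp
qed

lemma qform_add_axis:
  assumes "hermitian B"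
  shows "qform B (v + t *s axis k 1) = qform B v + cnj t * (B *v v) $ k + t * cnj ((B *v v) $ k)
           + cnj t * t * B $ k $ k"
proof -
  have Bv: "(B *v (v + t *s axis k 1)) $ i = (B *v v) $ i + B $ i $ k * t" for i
  proof -
    have "(\<Sum>j\<in>UNIV. B $ i $ j * (v + t *s axis k 1) $ j)
        = (\<Sum>j\<in>UNIV. B $ i $ j * v $ j + (if j = k then B $ i $ k * t else 0))"
      by (rule sum.cong) (auto simp: axis_def algebra_simps)
    then show ?thesis by (simp add: matrix_vector_mult_def sum.distrib)
  qed
  have cross: "(\<Sum>i\<in>UNIV. cnj (v $ i) * (B $ i $ k * t)) = t * cnj ((B *v v) $ k)"
    by (simp add: hermitian_entry[OF assms, of k] matrix_vector_mult_def sum_distrib_left algebra_simps)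
  have "qform B (v + t *s axis k 1)
      = (\<Sum>i\<in>UNIV. cnj (v $ i) * (B *v v) $ i + cnj (v $ i) * (B $ i $ k * t)
           + (if i = k then cnj t * ((B *v v) $ k + B $ k $ k * t) else 0))"
    unfolding qform_def Bv by (rule sum.cong) (auto simp: axis_def algebra_simps)
  also have "\<dots> = qform B v + t * cnj ((B *v v) $ k) + cnj t * ((B *v v) $ k + B $ k $ k * t)"
    by (simp add: sum.distrib qform_def cross)
  finally show ?thesis by (simp add: algebra_simps)
qed

lemma qform_outer:
  "qform (outer b) v = cnj (\<Sum>j\<in>UNIV. cnj (b $ j) * v $ j) * (\<Sum>j\<in>UNIV. cnj (b $ j) * v $ j)"
proof -
  have "qform (outer b) v = (\<Sum>i\<in>UNIV. cnj (v $ i) * b $ i * (\<Sum>j\<in>UNIV. cnj (b $ j) * v $ j))"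
    unfolding qform_def
    by (simp add: outer_def matrix_vector_mult_def sum_distrib_left mult.assoc mult.left_commute)
  then show ?thesis by (simp add: sum_distrib_right mult.commute)
qed

lemma hermitian_outer: "hermitian (outer b)"
  by (simp add: hermitian_def cadj_def outer_def vec_eq_iff)

text \<open>A nonzero \<open>B\<^sub>k\<^sub>j\<close> with \<open>B\<^sub>k\<^sub>k = 0\<close> would make the form negative at
  \<open>e\<^sub>j - s B\<^sub>k\<^sub>j e\<^sub>k\<close> for large \<open>s\<close>.\<close>

lemma psd_diag_zero_imp_row_zero:
  assumes "psd B" "B $ k $ k = 0"
  shows "B $ k $ j = 0"
proof (rule ccontr)
  assume nz: "B $ k $ j \<noteq> 0"
  have herm: "hermitian B" using assms(1) psd_def by blast
  define q where "q = Re (qform B (axis j 1))"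
  define a where "a = cmod (B $ k $ j) ^ 2"
  have apos: "a > 0" using nz by (simp add: a_def)
  define s where "s = (\<bar>q\<bar> + 1) / (2 * a)"
  define t where "t = - complex_of_real s * B $ k $ j"
  have "0 \<le> Re (qform B (axis j 1 + t *s axis k 1))" using assms(1) psd_def by blast
  also have "qform B (axis j 1 + t *s axis k 1)
      = qform B (axis j 1) - 2 * complex_of_real s * (cnj (B $ k $ j) * B $ k $ j)"
    unfolding qform_add_axis[OF herm] matrix_vector_mult_axis assms(2) t_def
    by (simp add: algebra_simps)
  also have "cnj (B $ k $ j) * B $ k $ j = complex_of_real a"
    unfolding a_def by (metis complex_norm_square mult.commute of_real_power)
  finally have "0 \<le> q - 2 * s * a" by (simp add: q_def)
  moreover have "2 * s * a = \<bar>q\<bar> + 1" using apos by (simp add: s_def)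
  ultimately show False by linarith
qed

text \<open>One Cholesky step: the form of \<open>B - b b\<^sup>H\<close> at \<open>v\<close> is the form of \<open>B\<close> at
  \<open>v - ((Bv)\<^sub>k / B\<^sub>k\<^sub>k) e\<^sub>k\<close>.\<close>

lemma psd_sub_pivot_outer:
  assumes "psd B" "0 < Re (B $ k $ k)"
  obtains b where "\<And>i j. outer b $ i $ j = B $ i $ k * B $ k $ j / B $ k $ k"
    and "psd (B - outer b)"
proof
  have herm: "hermitian B" using assms(1) psd_def by blast
  define \<beta> where "\<beta> = Re (B $ k $ k)"
  have Bkk: "B $ k $ k = complex_of_real \<beta>" using hermitian_diag_real[OF herm] \<beta>_def by simp
  have bnz: "complex_of_real \<beta> \<noteq> 0" using assms(2) \<beta>_def by simp
  have sq: "complex_of_real (sqrt \<beta>) * complex_of_real (sqrt \<beta>) = complex_of_real \<beta>"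
    using assms(2) \<beta>_def by (simp flip: of_real_mult)
  define b where "b = (\<chi> i. B $ i $ k / complex_of_real (sqrt \<beta>))"
  show entry: "outer b $ i $ j = B $ i $ k * B $ k $ j / B $ k $ k" for i j
    using hermitian_entry[OF herm, of k j] sq Bkk by (simp add: outer_def b_def)
  have "0 \<le> Re (qform (B - outer b) v)" for v
  proof -
    define c where "c = (B *v v) $ k"
    have bv: "(\<Sum>j\<in>UNIV. cnj (b $ j) * v $ j) = c / complex_of_real (sqrt \<beta>)"
      unfolding b_def c_def matrix_vector_mult_def
      by (simp add: hermitian_entry[OF herm, of k] sum_divide_distrib)
    have "qform (B - outer b) v = qform B v - cnj c * c / complex_of_real \<beta>"
      unfolding qform_diff qform_outer bv using sq by (simp add: field_simps)
    also have "\<dots> = qform B (v + (- c / complex_of_real \<beta>) *s axis k 1)"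
      unfolding qform_add_axis[OF herm] c_def[symmetric] Bkk using bnz by (simp add: field_simps)
    finally show ?thesis using assms(1) psd_def by metis
  qed
  then show "psd (B - outer b)"
    using herm hermitian_outer unfolding psd_def hermitian_def by (simp add: cadj_diff)
qed

lemma psd_supported_eq_sum_outer:
  fixes B :: "complex^'n^'n"
  assumes "finite S" "psd B" "\<And>i j. i \<notin> S \<or> j \<notin> S \<Longrightarrow> B $ i $ j = 0"
  shows "\<exists>b. (\<forall>r. r \<notin> S \<longrightarrow> b r = 0) \<and> B = (\<Sum>r\<in>UNIV. outer (b r))"
  using assms
proof (induction S arbitrary: B rule: finite_induct)
  case empty
  then have "B = 0" by (simp add: vec_eq_iff)
  then show ?case by (intro exI[of _ "\<lambda>_. 0"]) (simp add: outer_def vec_eq_iff)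
next
  case (insert k S)
  have herm: "hermitian B" using insert.prems(1) psd_def by blast
  have Bkk_ge: "0 \<le> Re (B $ k $ k)" using insert.prems(1) qform_axis[of B k] unfolding psd_def by metis
  show ?case
  proof (cases "Re (B $ k $ k) = 0")
    case True
    then have "B $ k $ k = 0" using hermitian_diag_real[OF herm, of k] by simp
    then have row: "B $ k $ j = 0" and col: "B $ j $ k = 0" for j
      using psd_diag_zero_imp_row_zero[OF insert.prems(1)] hermitian_entry[OF herm, of k j] by auto
    have "B $ i $ j = 0" if "i \<notin> S \<or> j \<notin> S" for i j
      using that insert.prems(2) row col by (cases "i = k"; cases "j = k") auto
    from insert.IH[OF insert.prems(1) this] obtain b where
      "\<forall>r. r \<notin> S \<longrightarrow> b r = 0" "B = (\<Sum>r\<in>UNIV. outer (b r))" by blast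
    then show ?thesis by (intro exI[of _ b]) auto
  next
    case False
    then have pos: "0 < Re (B $ k $ k)" using Bkk_ge by linarith
    obtain b where b: "\<And>i j. outer b $ i $ j = B $ i $ k * B $ k $ j / B $ k $ k"
      and psd': "psd (B - outer b)"
      using psd_sub_pivot_outer[OF insert.prems(1) pos] by blast
    have Bkk: "B $ k $ k \<noteq> 0" using pos by auto
    have "(B - outer b) $ i $ j = 0" if "i \<notin> S \<or> j \<notin> S" for i j
    proof (cases "i = k \<or> j = k")
      case True
      then show ?thesis using Bkk by (auto simp: b)
    next
      case False
      then have "B $ i $ j = 0" "B $ i $ k = 0 \<or> B $ k $ j = 0"
        using that insert.prems(2) by auto
      then show ?thesis by (auto simp: b)
    qed
    from insert.IH[OF psd' this] obtain c where
      c: "\<forall>r. r \<notin> S \<longrightarrow> c r = 0" "B - outer b = (\<Sum>r\<in>UNIV. outer (c r))" by blast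
    have "(\<Sum>r\<in>UNIV. outer ((c(k := b)) r)) = outer b + (\<Sum>r\<in>UNIV - {k}. outer (c r))"
      by (simp add: sum.remove[of UNIV k])
    also have "(\<Sum>r\<in>UNIV - {k}. outer (c r)) = (\<Sum>r\<in>UNIV. outer (c r))"
      by (simp add: sum.remove[of UNIV k] c(1) insert.hyps(2) outer_def zero_vec_def)
    finally have "B = (\<Sum>r\<in>UNIV. outer ((c(k := b)) r))" using c(2) by (metis add.commute diff_add_cancel)
    with c(1) show ?thesis by (intro exI[of _ "c(k := b)"]) auto
  qed
qed

lemma psd_eq_sum_outer:
  fixes B :: "complex^'n^'n"
  assumes "psd B"
  obtains b :: "'n \<Rightarrow> complex^'n" where "B = (\<Sum>r\<in>UNIV. outer (b r))"
  using psd_supported_eq_sum_outer[OF finite assms] by auto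

lemma sandwich_outer: "cadj Z ** outer b ** Z = outer (cadj Z *v b)"
proof -
  have "(cadj Z ** outer b ** Z) $ i $ j = outer (cadj Z *v b) $ i $ j" for i j
  proof -
    have "(cadj Z ** outer b ** Z) $ i $ j
        = (\<Sum>c\<in>UNIV. (\<Sum>a\<in>UNIV. cnj (Z $ a $ i) * (b $ a * cnj (b $ c))) * Z $ c $ j)"
      by (simp add: matrix_matrix_mult_def cadj_def outer_def)
    also have "\<dots> = (\<Sum>c\<in>UNIV. \<Sum>a\<in>UNIV. cnj (Z $ a $ i) * b $ a * (cnj (b $ c) * Z $ c $ j))"
      by (rule sum.cong[OF refl]) (simp add: sum_distrib_right sum_distrib_left mult_ac)
    also have "\<dots> = (\<Sum>a\<in>UNIV. cnj (Z $ a $ i) * b $ a) * (\<Sum>c\<in>UNIV. cnj (b $ c) * Z $ c $ j)"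
      by (subst sum.swap) (simp add: sum_product)
    also have "\<dots> = outer (cadj Z *v b) $ i $ j"
      by (simp add: outer_def matrix_vector_mult_def cadj_def mult.commute)
    finally show ?thesis .
  qed
  then show ?thesis by (simp add: vec_eq_iff)
qed

lemma trace_outer_mult: "trace (outer w ** C) = qform C w"
proof -
  have "trace (outer w ** C) = (\<Sum>i\<in>UNIV. \<Sum>k\<in>UNIV. w $ i * cnj (w $ k) * C $ k $ i)"
    by (simp add: trace_def matrix_matrix_mult_def outer_def)
  also have "\<dots> = (\<Sum>k\<in>UNIV. \<Sum>i\<in>UNIV. cnj (w $ k) * (C $ k $ i * w $ i))"
    by (subst sum.swap) (simp add: mult_ac)
  finally show ?thesis by (simp add: qform_def matrix_vector_mult_def sum_distrib_left)
qed

lemma trace_sandwich_sum: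
  fixes M :: "'r \<Rightarrow> complex^'m^'m" and Z :: "complex^'d^'m"
  assumes "finite R"
  shows "trace (cadj Z ** (\<Sum>r\<in>R. M r) ** Z ** C) = (\<Sum>r\<in>R. trace (cadj Z ** M r ** Z ** C))"
  using assms
  by (induction R rule: finite_induct)
     (simp add: trace_def, simp add: matrix_add_ldistrib matrix_add_rdistrib trace_add)

lemma trace_sandwich_sum_outer:
  fixes b :: "'r::finite \<Rightarrow> complex^'m"
  assumes "B = (\<Sum>r\<in>UNIV. outer (b r))"
  shows "trace (cadj Z ** B ** Z ** C) = (\<Sum>r\<in>UNIV. qform C (cadj Z *v b r))"
  by (simp only: assms trace_sandwich_sum[OF finite] sandwich_outer trace_outer_mult)

lemma trace_sandwich_nonneg:
  fixes B :: "complex^'m^'m" and C :: "complex^'d^'d" and Z :: "complex^'d^'m"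
  assumes "psd B" "psd C"
  shows "0 \<le> Re (trace (cadj Z ** B ** Z ** C))"
proof -
  obtain b :: "'m \<Rightarrow> complex^'m" where b: "B = (\<Sum>r\<in>UNIV. outer (b r))"
    using psd_eq_sum_outer[OF assms(1)] .
  have "0 \<le> Re (qform C w)" for w using assms(2) psd_def by blast
  then show ?thesis unfolding trace_sandwich_sum_outer[OF b] Re_sum by (simp add: sum_nonneg)
qed

text \<open>If every \<open>Z\<^sup>H b\<^sub>r\<close> vanished, each column \<open>z\<close> of \<open>Z\<close> would satisfy
  \<open>z\<^sup>H B z = \<Sum>\<^sub>r |b\<^sub>r\<^sup>H z|\<^sup>2 = 0\<close>.\<close>

lemma trace_sandwich_pos:
  fixes B :: "complex^'m^'m" and C :: "complex^'d^'d" and Z :: "complex^'d^'m"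
  assumes "hpd B" "hpd C" "Z \<noteq> 0"
  shows "0 < Re (trace (cadj Z ** B ** Z ** C))"
proof -
  obtain b :: "'m \<Rightarrow> complex^'m" where b: "B = (\<Sum>r\<in>UNIV. outer (b r))"
    using psd_eq_sum_outer[OF hpd_imp_psd[OF assms(1)]] .
  obtain a j where "Z $ a $ j \<noteq> 0" using assms(3) by (auto simp: vec_eq_iff)
  define z where "z = (\<chi> a. Z $ a $ j)"
  have "z \<noteq> 0" using \<open>Z $ a $ j \<noteq> 0\<close> by (auto simp: z_def vec_eq_iff)
  have "\<exists>r. cadj Z *v b r \<noteq> 0"
  proof (rule ccontr)
    assume "\<not> ?thesis"
    then have "cnj ((cadj Z *v b r) $ j) = 0" for r by simp
    then have "(\<Sum>i\<in>UNIV. cnj (b r $ i) * z $ i) = 0" for r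
      by (simp add: matrix_vector_mult_def cadj_def z_def mult.commute)
    then have "qform B z = 0" by (simp add: b qform_sum qform_outer)
    then show False using \<open>z \<noteq> 0\<close> assms(1) unfolding hpd_iff_qform by force
  qed
  then obtain r where r: "cadj Z *v b r \<noteq> 0" by blast
  have "0 \<le> Re (qform C (cadj Z *v b r'))" for r'
    using hpd_imp_psd[OF assms(2)] by (simp add: psd_def)
  moreover have "0 < Re (qform C (cadj Z *v b r))"
    using assms(2) r by (simp add: hpd_iff_qform)
  ultimately show ?thesis
    unfolding trace_sandwich_sum_outer[OF b] Re_sum by (intro sum_pos2[of UNIV r]) auto
qed

lemma hpd_matrix_inv:
  fixes B :: "complex^'m^'m"
  assumes "hpd B"
  shows "B ** matrix_inv B = mat 1" "matrix_inv B ** B = mat 1"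
proof -
  have "B *v x = 0 \<Longrightarrow> x = 0" for x
    using assms by (auto simp: hpd_iff_qform qform_def)
  then have "invertible B"
    using matrix_left_invertible_ker invertible_left_inverse by blast
  then have "B ** matrix_inv B = mat 1 \<and> matrix_inv B ** B = mat 1"
    unfolding invertible_def matrix_inv_def by (rule someI_ex)
  then show "B ** matrix_inv B = mat 1" "matrix_inv B ** B = mat 1" by auto
qed

lemma hpd_cadj_matrix_inv:
  fixes B :: "complex^'m^'m"
  assumes "hpd B"
  shows "cadj (matrix_inv B) = matrix_inv B"
proof -
  have "B ** cadj (matrix_inv B) = mat 1"
    using assms hpd_matrix_inv(2)[OF assms] cadj_mat
    by (metis cadj_mult hpd_def hermitian_def)
  then have "matrix_inv B ** (B ** cadj (matrix_inv B)) = matrix_inv B" by simp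
  then show ?thesis by (simp add: matrix_mul_assoc hpd_matrix_inv(2)[OF assms])
qed

definition trace_form :: "complex^'m^'m \<Rightarrow> complex^'d^'d \<Rightarrow> complex^'d^'m \<Rightarrow> complex^'d^'m \<Rightarrow> complex"
  where "trace_form B C U V = trace (cadj U ** B ** V ** C)"

lemma trace_form_zero_right [simp]: "trace_form B C U 0 = 0"
  by (simp add: trace_form_def matrix_matrix_mult_def trace_def)

lemma trace_form_add_left: "trace_form B C (U + V) W = trace_form B C U W + trace_form B C V W"
  by (simp add: trace_form_def cadj_add matrix_add_rdistrib trace_add)

lemma trace_form_add_right: "trace_form B C U (V + W) = trace_form B C U V + trace_form B C U W"
  by (simp add: trace_form_def matrix_add_ldistrib matrix_add_rdistrib trace_add)

lemma trace_form_swap: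
  assumes "hermitian B" "hermitian C"
  shows "trace_form B C V U = cnj (trace_form B C U V)"
proof -
  have "cnj (trace_form B C U V) = trace (C ** (cadj V ** B ** U))"
    using assms unfolding trace_form_def trace_cadj[symmetric] hermitian_def
    by (simp add: cadj_mult matrix_mul_assoc)
  also have "\<dots> = trace_form B C V U" unfolding trace_form_def by (rule trace_mul_sym)
  finally show ?thesis by simp
qed

text \<open>Completing the square for one summand of \<open>f\<^sub>q\<close>, with \<open>Y\<^sub>0 = B\<^sup>-\<^sup>1 A\<close>:
  \<open>A\<^sup>H = Y\<^sub>0\<^sup>H B\<close> and \<open>M = Y\<^sub>0\<^sup>H B Y\<^sub>0\<close>.\<close>

lemma quadratic_transform_summand:
  fixes B :: "complex^'m^'m" and C :: "complex^'d^'d" and A Y :: "complex^'d^'m"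
  assumes B: "hpd B" and C: "hpd C"
  shows "Im (trace (C ** mratio A B)) = 0"
    and "Re (trace (2 *\<^sub>R mRe (cadj A ** Y ** C) - cadj Y ** B ** Y ** C))
         = Re (trace (C ** mratio A B))
           - Re (trace_form B C (Y - matrix_inv B ** A) (Y - matrix_inv B ** A))"
proof -
  define Y0 where "Y0 = matrix_inv B ** A"
  define Z where "Z = Y - Y0"
  have herm: "hermitian B" "hermitian C" using B C hpd_def by blast+
  have "B ** Y0 = A" unfolding Y0_def by (simp add: matrix_mul_assoc hpd_matrix_inv(1)[OF B])
  then have "cadj A = cadj Y0 ** B" using herm(1) by (metis cadj_mult hermitian_def)
  then have A: "trace (cadj A ** Y ** C) = trace_form B C Y0 Y" unfolding trace_form_def by simp
  have "mratio A B = cadj Y0 ** B ** Y0"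
    unfolding mratio_def Y0_def cadj_mult hpd_cadj_matrix_inv[OF B]
    by (simp add: matrix_mul_assoc[symmetric] hpd_matrix_inv(2)[OF B])
  then have M: "trace (C ** mratio A B) = trace_form B C Y0 Y0"
    unfolding trace_form_def by (simp add: trace_mul_sym[of C])
  have "Im (trace_form B C Y0 Y0) = Im (cnj (trace_form B C Y0 Y0))"
    using trace_form_swap[OF herm, of Y0 Y0] by simp
  then have "Im (trace_form B C Y0 Y0) = 0" by simp
  then show "Im (trace (C ** mratio A B)) = 0" using M by simp
  have Y: "Y = Y0 + Z" unfolding Z_def by simp
  have cross: "Re (trace_form B C Z Y0) = Re (trace_form B C Y0 Z)"
    using trace_form_swap[OF herm, of Y0 Z] by simp
  have "Re (trace (2 *\<^sub>R mRe (cadj A ** Y ** C) - cadj Y ** B ** Y ** C))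
        = 2 * Re (trace_form B C Y0 Y) - Re (trace_form B C Y Y)"
    by (simp add: trace_sub trace_scaleR trace_mRe A trace_form_def[symmetric])
  also have "\<dots> = Re (trace_form B C Y0 Y0) - Re (trace_form B C Z Z)"
    using cross unfolding Y trace_form_add_left trace_form_add_right by simp
  finally show "Re (trace (2 *\<^sub>R mRe (cadj A ** Y ** C) - cadj Y ** B ** Y ** C))
      = Re (trace (C ** mratio A B)) - Re (trace_form B C (Y - matrix_inv B ** A) (Y - matrix_inv B ** A))"
    using M Z_def Y0_def by simp
qed

lemma fq_eq_gobj_minus_trace_form:
  assumes "\<And>i. hpd (C i)" "\<And>i. hpd (B x i)"
  shows "fq \<omega> C A B x Y = Re (gobj \<omega> C A B x)
    - (\<Sum>i\<in>UNIV. \<omega> i * Re (trace_form (B x i) (C i)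
         (Y i - matrix_inv (B x i) ** A x i) (Y i - matrix_inv (B x i) ** A x i)))"
proof -
  have "fq \<omega> C A B x Y = (\<Sum>i\<in>UNIV. \<omega> i * (Re (trace (C i ** mratio (A x i) (B x i)))
      - Re (trace_form (B x i) (C i)
          (Y i - matrix_inv (B x i) ** A x i) (Y i - matrix_inv (B x i) ** A x i))))"
    unfolding fq_def Re_sum using quadratic_transform_summand(2)[OF assms(2) assms(1)] by simp
  then show ?thesis unfolding gobj_def Re_sum by (simp add: right_diff_distrib sum_subtractf)
qed

lemma Im_gobj:
  assumes "\<And>i. hpd (C i)" "\<And>i. hpd (B x i)"
  shows "Im (gobj \<omega> C A B x) = 0"
  unfolding gobj_def Im_sum using quadratic_transform_summand(1)[OF assms(2) assms(1)] by simp

lemma quadratic_transform_max: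
  assumes "\<And>i. 0 < \<omega> i" "\<And>i. hpd (C i)" "\<And>i. hpd (B x i)"
  shows "fq \<omega> C A B x Y \<le> Re (gobj \<omega> C A B x)"
    and "fq \<omega> C A B x Y = Re (gobj \<omega> C A B x) \<longleftrightarrow> Y = (\<lambda>i. matrix_inv (B x i) ** A x i)"
proof -
  define Z where "Z i = Y i - matrix_inv (B x i) ** A x i" for i
  define Q where "Q i = \<omega> i * Re (trace_form (B x i) (C i) (Z i) (Z i))" for i
  have fq: "fq \<omega> C A B x Y = Re (gobj \<omega> C A B x) - (\<Sum>i\<in>UNIV. Q i)"
    unfolding Q_def Z_def by (rule fq_eq_gobj_minus_trace_form[where B = B and x = x, OF assms(2,3)])
  have Q_nonneg: "0 \<le> Q i" for i
    using trace_sandwich_nonneg[OF hpd_imp_psd[OF assms(3)] hpd_imp_psd[OF assms(2)]] assms(1)[of i]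
    unfolding Q_def trace_form_def by simp
  have Q_pos: "0 < Q i" if "Z i \<noteq> 0" for i
    using trace_sandwich_pos[OF assms(3) assms(2) that] assms(1)[of i]
    unfolding Q_def trace_form_def by simp
  show "fq \<omega> C A B x Y \<le> Re (gobj \<omega> C A B x)"
    using fq Q_nonneg by (simp add: sum_nonneg)
  show "fq \<omega> C A B x Y = Re (gobj \<omega> C A B x) \<longleftrightarrow> Y = (\<lambda>i. matrix_inv (B x i) ** A x i)"
  proof
    assume "fq \<omega> C A B x Y = Re (gobj \<omega> C A B x)"
    then have "Q i = 0" for i using fq Q_nonneg by (simp add: sum_nonneg_eq_0_iff)
    then have "Z i = 0" for i using Q_pos by fastforce
    then show "Y = (\<lambda>i. matrix_inv (B x i) ** A x i)" by (simp add: Z_def fun_eq_iff)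
  next
    assume "Y = (\<lambda>i. matrix_inv (B x i) ** A x i)"
    then show "fq \<omega> C A B x Y = Re (gobj \<omega> C A B x)" using fq by (simp add: Q_def Z_def)
  qed
qed

lemma SUP_eq_SUP_partial_max:
  fixes f :: "'x \<Rightarrow> 'y \<Rightarrow> 'a::complete_lattice"
  assumes "\<And>x y. x \<in> X \<Longrightarrow> f x y \<le> g x" and "\<And>x. x \<in> X \<Longrightarrow> f x (opt x) = g x"
  shows "(SUP x\<in>X. g x) = (SUP p\<in>X \<times> UNIV. f (fst p) (snd p))"
proof (rule antisym)
  show "(SUP x\<in>X. g x) \<le> (SUP p\<in>X \<times> UNIV. f (fst p) (snd p))"
  proof (rule SUP_least)
    fix x assume "x \<in> X"
    then show "g x \<le> (SUP p\<in>X \<times> UNIV. f (fst p) (snd p))"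
      using SUP_upper[of "(x, opt x)" "X \<times> UNIV" "\<lambda>p. f (fst p) (snd p)"] assms(2) by simp
  qed
  show "(SUP p\<in>X \<times> UNIV. f (fst p) (snd p)) \<le> (SUP x\<in>X. g x)"
  proof (rule SUP_least)
    fix p :: "'x \<times> 'y" assume "p \<in> X \<times> UNIV"
    then show "f (fst p) (snd p) \<le> (SUP x\<in>X. g x)"
      using SUP_upper2[of "fst p" X "f (fst p) (snd p)" g] assms(1) by auto
  qed
qed

lemma argmax_iff_argmax_partial_max:
  fixes f :: "'x \<Rightarrow> 'y \<Rightarrow> 'a::preorder"
  assumes "\<And>x y. x \<in> X \<Longrightarrow> f x y \<le> g x" and "\<And>x. x \<in> X \<Longrightarrow> f x (opt x) = g x"
    and "xs \<in> X"
  shows "(\<forall>x\<in>X. g x \<le> g xs) \<longleftrightarrow> (\<forall>x\<in>X. \<forall>y. f x y \<le> f xs (opt xs))"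
  using assms by (metis order_trans)

theorem proposition2:
  fixes \<omega> :: "'n::finite \<Rightarrow> real"
    and C :: "'n \<Rightarrow> complex^'d::finite^'d"
    and A :: "'x \<Rightarrow> 'n \<Rightarrow> complex^'d^'m::finite"
    and B :: "'x \<Rightarrow> 'n \<Rightarrow> complex^'m^'m"
    and X :: "'x set"
  assumes "X \<noteq> {}"
    and "\<And>i. \<omega> i > 0"
    and "\<And>i. hpd (C i)"
    and "\<And>x i. x \<in> X \<Longrightarrow> hpd (B x i)"
  shows "(\<forall>x\<in>X.
            Im (gobj \<omega> C A B x) = 0 \<and>
            fq \<omega> C A B x (\<lambda>i. matrix_inv (B x i) ** A x i) = Re (gobj \<omega> C A B x) \<and>
            (\<forall>Y. fq \<omega> C A B x Y \<le> Re (gobj \<omega> C A B x)) \<and>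
            (\<forall>Y. fq \<omega> C A B x Y = Re (gobj \<omega> C A B x) \<longrightarrow>
                 Y = (\<lambda>i. matrix_inv (B x i) ** A x i)))
      \<and> (SUP x\<in>X. ereal (Re (gobj \<omega> C A B x)))
          = (SUP p\<in>X \<times> UNIV. ereal (fq \<omega> C A B (fst p) (snd p)))
      \<and> (\<forall>xs\<in>X.
            (\<forall>x\<in>X. Re (gobj \<omega> C A B x) \<le> Re (gobj \<omega> C A B xs))
            \<longleftrightarrow>
            (\<forall>x\<in>X. \<forall>Y. fq \<omega> C A B x Y
                       \<le> fq \<omega> C A B xs (\<lambda>i. matrix_inv (B xs i) ** A xs i)))"
proof -
  let ?opt = "\<lambda>x i. matrix_inv (B x i) ** A x i"
  have max: "fq \<omega> C A B x Y \<le> Re (gobj \<omega> C A B x)"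
    "fq \<omega> C A B x Y = Re (gobj \<omega> C A B x) \<longleftrightarrow> Y = ?opt x" if "x \<in> X" for x Y
    using quadratic_transform_max[where B = B and x = x, OF assms(2,3) assms(4)[OF that]] by auto
  have opt: "fq \<omega> C A B x (?opt x) = Re (gobj \<omega> C A B x)" if "x \<in> X" for x
    using max(2)[OF that] by blast
  have "(SUP x\<in>X. ereal (Re (gobj \<omega> C A B x)))
      = (SUP p\<in>X \<times> UNIV. ereal (fq \<omega> C A B (fst p) (snd p)))"
    by (rule SUP_eq_SUP_partial_max[where opt = ?opt]) (simp_all add: max(1) opt)
  moreover have "(\<forall>x\<in>X. Re (gobj \<omega> C A B x) \<le> Re (gobj \<omega> C A B xs))
      \<longleftrightarrow> (\<forall>x\<in>X. \<forall>Y. fq \<omega> C A B x Y \<le> fq \<omega> C A B xs (?opt xs))" if "xs \<in> X" for xs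
    by (rule argmax_iff_argmax_partial_max[where opt = ?opt]) (simp_all add: max(1) opt that)
  moreover have "Im (gobj \<omega> C A B x) = 0" if "x \<in> X" for x
    using Im_gobj[where B = B and x = x, OF assms(3) assms(4)[OF that]] .
  ultimately show ?thesis using max opt by blast
qed

end
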